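(* Let $X=(X_1,X_2,\ldots)$ be a stationary, $\psi$-mixing process with values in a finite set $\mathbb X$. Then there exists a sequence $(\lambda_\tau)_{\tau\ge0}$ with $\lambda_\tau\to0$ as $\tau\to\infty$ such that for all $t\in\mathbb N$, all $\tau\in\{0,1,2,\ldots\}$, all $T\in\{0,1,2,\ldots\}$, all $\mathbb A\subseteq\mathbb X^t$ with $\Pr(X_1^t\in\mathbb A)>0$ and all $\mathbb B\subseteq\mathbb X^T$, $$\Pr(X_{t+\tau+1}^{t+\tau+T}\in\mathbb B\mid X_1^t\in\mathbb A)=(1-\lambda_\tau)P_T(\mathbb B)+\lambda_\tau P'_{t,\tau,T,\mathbb A}(\mathbb B)$$ for some probability distribution $P'_{t,\tau,T,\mathbb A}$ on $\mathbb X^T$ (which may depend on $t,\tau,T,\mathbb A$ but not on $\mathbb B$).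
   Context: $X_a^b=(X_a,\ldots,X_b)$. $P_T(\mathbb B)=\Pr(X_{s+1}^{s+T}\in\mathbb B)$ for $\mathbb B\subseteq\mathbb X^T$, which is independent of $s$ by stationarity. $\psi$-mixing: for $\tau\in\{0,1,2,\ldots\}$ let $\psi(\tau)=\sup_{t\in\mathbb N}\sup_{\mathbb A,\mathbb B}\left|\frac{\Pr(X_1^t\in\mathbb A,\,X_{t+\tau+1}^\infty\in\mathbb B)}{\Pr(X_1^t\in\mathbb A)\Pr(X_{t+\tau+1}^\infty\in\mathbb B)}-1\right|$, the inner supremum over $\mathbb A\subseteq\mathbb X^t$ and Borel (product $\sigma$-field) sets $\mathbb B$ of sequences indexed by times $t+\tau+1,t+\tau+2,\ldots$, with both probabilities in the denominator positive. $X$ is $\psi$-mixing if $\psi(\tau)\to0$ as $\tau\to\infty$. *)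

theory Defs
  imports "HOL-Probability.Probability"
begin

text \<open>The process is X :: nat => 'a => 'x on a probability space M, with X 1, X 2, ...
  the relevant coordinates (X 0 is ignored).
  block X s T w is the list (X (s+1) w, ..., X (s+T) w), i.e. X_{s+1}^{s+T}.\<close>

definition block :: "(nat \<Rightarrow> 'a \<Rightarrow> 'x) \<Rightarrow> nat \<Rightarrow> nat \<Rightarrow> 'a \<Rightarrow> 'x list" where
  "block X s T w = map (\<lambda>i. X (s + i + 1) w) [0..<T]"

definition stationary_proc :: "'a measure \<Rightarrow> (nat \<Rightarrow> 'a \<Rightarrow> 'x) \<Rightarrow> bool" where
  "stationary_proc M X \<longleftrightarrow>
     (\<forall>s T (B :: 'x list set). measure M {w \<in> space M. block X s T w \<in> B}
                             = measure M {w \<in> space M. block X 0 T w \<in> B})"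

definition PT :: "'a measure \<Rightarrow> (nat \<Rightarrow> 'a \<Rightarrow> 'x) \<Rightarrow> nat \<Rightarrow> 'x list set \<Rightarrow> real" where
  "PT M X T B = measure M {w \<in> space M. block X 0 T w \<in> B}"

text \<open>Past event {X_1^t in A} and future event {X_{t+tau+1}^\<infinity> in B}, B a product-measurable
  set of sequences (indexed from 0, i.e. n-th entry is X_{t+tau+1+n}).\<close>
definition past_event :: "'a measure \<Rightarrow> (nat \<Rightarrow> 'a \<Rightarrow> 'x) \<Rightarrow> nat \<Rightarrow> 'x list set \<Rightarrow> 'a set" where
  "past_event M X t A = {w \<in> space M. block X 0 t w \<in> A}"

definition future_event :: "'a measure \<Rightarrow> (nat \<Rightarrow> 'a \<Rightarrow> 'x) \<Rightarrow> nat \<Rightarrow> (nat \<Rightarrow> 'x) set \<Rightarrow> 'a set" where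
  "future_event M X u B = {w \<in> space M. (\<lambda>n. X (u + 1 + n) w) \<in> B}"

definition psi_coeff :: "'a measure \<Rightarrow> (nat \<Rightarrow> 'a \<Rightarrow> 'x) \<Rightarrow> nat \<Rightarrow> ereal" where
  "psi_coeff M X \<tau> =
     (SUP (t, A, B) \<in> {(t, A, B). t \<ge> 1 \<and> A \<subseteq> {xs. length xs = t}
          \<and> B \<in> sets (PiM UNIV (\<lambda>_. count_space (UNIV :: 'x set)))
          \<and> measure M (past_event M X t A) > 0
          \<and> measure M (future_event M X (t + \<tau>) B) > 0}.
        ereal \<bar>measure M (past_event M X t A \<inter> future_event M X (t + \<tau>) B)
               / (measure M (past_event M X t A) * measure M (future_event M X (t + \<tau>) B)) - 1\<bar>)"

definition psi_mixing :: "'a measure \<Rightarrow> (nat \<Rightarrow> 'a \<Rightarrow> 'x) \<Rightarrow> bool" where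
  "psi_mixing M X \<longleftrightarrow> (psi_coeff M X \<longlonglongrightarrow> 0)"

end

theory Submission
  imports Defs
begin

text \<open>A single pattern \<open>x\<close> of the future block is a cylinder event of the future, so the
  \<open>\<psi>\<close>-mixing ratio bounds its probability conditional on the past event from below by
  \<open>1 - \<psi>(\<tau>)\<close> times its unconditional probability, which by stationarity is \<open>P\<^sub>T({x})\<close>.
  Hence the conditional law \<open>q\<close> of the block dominates \<open>(1 - \<lambda>) P\<^sub>T\<close> pointwise, with \<open>\<lambda>\<close>
  the truncation of \<open>\<psi>(\<tau>)\<close> to \<open>[0, 1]\<close>, and the normalised remainder \<open>(q - (1 - \<lambda>) P\<^sub>T) / \<lambda>\<close>
  is the distribution \<open>P'\<close>.\<close>

lemma finite_mixture_decomposition: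
  fixes q p :: "'b \<Rightarrow> real" and lam :: real
  assumes fin: "finite L"
    and q_sum: "sum q L = 1" and p_sum: "sum p L = 1"
    and lam: "0 \<le> lam" "lam \<le> 1"
    and dominates: "\<forall>x\<in>L. (1 - lam) * p x \<le> q x"
  shows "\<exists>P' :: 'b pmf. set_pmf P' \<subseteq> L \<and>
     (\<forall>B\<subseteq>L. sum q B = (1 - lam) * sum p B + lam * measure_pmf.prob P' B)"
proof (cases "lam = 0")
  case True
  obtain a where a: "a \<in> L" using p_sum by fastforce
  have "sum (\<lambda>x. q x - p x) L = 0" using q_sum p_sum by (simp add: sum_subtractf)
  then have "\<forall>x\<in>L. q x = p x"
    using sum_nonneg_eq_0_iff[OF fin, of "\<lambda>x. q x - p x"] dominates True by auto
  then have "\<forall>B\<subseteq>L. sum q B = sum p B" by (metis subsetD sum.cong)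
  then show ?thesis using a True by (intro exI[of _ "return_pmf a"]) auto
next
  case False
  with lam have lam_pos: "lam > 0" by simp
  define f where "f x = (if x \<in> L then (q x - (1 - lam) * p x) / lam else 0)" for x
  have f_nonneg: "0 \<le> f x" for x using dominates lam_pos by (auto simp: f_def)
  have sum_f: "sum f B = (sum q B - (1 - lam) * sum p B) / lam" if "B \<subseteq> L" for B
  proof -
    have "sum f B = (\<Sum>x\<in>B. q x - (1 - lam) * p x) / lam"
      using that by (auto simp: f_def sum_divide_distrib intro!: sum.cong)
    then show ?thesis by (simp add: sum_subtractf sum_distrib_left)
  qed
  have "(\<integral>\<^sup>+ x. ennreal (f x) \<partial>count_space UNIV) = (\<Sum>x\<in>L. ennreal (f x))"
    by (rule nn_integral_count_space'[OF fin]) (auto simp: f_def)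
  also have "\<dots> = ennreal (sum f L)" using f_nonneg by (simp add: sum_ennreal)
  also have "sum f L = 1" using sum_f[of L] q_sum p_sum lam_pos by simp
  finally have f_int: "(\<integral>\<^sup>+ x. ennreal (f x) \<partial>count_space UNIV) = 1" by simp
  define P' where "P' = embed_pmf f"
  have prob_P': "measure_pmf.prob P' B = sum f B" if "B \<subseteq> L" for B
    using that finite_subset[OF that fin]
    by (simp add: measure_measure_pmf_finite P'_def pmf_embed_pmf[OF f_nonneg f_int])
  show ?thesis
  proof (intro exI[of _ P'] conjI allI impI)
    show "set_pmf P' \<subseteq> L" unfolding P'_def set_embed_pmf[OF f_nonneg f_int] by (auto simp: f_def)
  next
    fix B assume "B \<subseteq> L"
    then show "sum q B = (1 - lam) * sum p B + lam * measure_pmf.prob P' B"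
      using lam_pos by (simp add: prob_P' sum_f)
  qed
qed

lemma sets_block_eq:
  assumes meas: "\<And>k. k \<ge> 1 \<Longrightarrow> X k \<in> measurable M (count_space UNIV)"
  shows "{w\<in>space M. block X s T w = x} \<in> sets M"
proof (cases "length x = T")
  case True
  then have "{w\<in>space M. block X s T w = x} = {w\<in>space M. \<forall>i\<in>{..<T}. X (s+i+1) w = x!i}"
    by (auto simp: block_def list_eq_iff_nth_eq)
  also have "\<dots> \<in> sets M"
    by (intro sets.sets_Collect_finite_All measurable_sets_Collect[OF meas]) auto
  finally show ?thesis .
next
  case False
  then have "{w\<in>space M. block X s T w = x} = {}" by (auto simp: block_def)
  then show ?thesis by (metis sets.empty_sets)
qed

lemma sets_block:
  fixes X :: "nat \<Rightarrow> 'a \<Rightarrow> 'x::finite"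
  assumes meas: "\<And>k. k \<ge> 1 \<Longrightarrow> X k \<in> measurable M (count_space UNIV)"
  shows "{w\<in>space M. block X s T w \<in> B} \<in> sets M"
proof -
  have "{w\<in>space M. block X s T w \<in> B}
      = (\<Union>x\<in>B \<inter> {xs. length xs = T}. {w\<in>space M. block X s T w = x})"
    by (auto simp: block_def)
  also have "\<dots> \<in> sets M"
    using finite_lists_length_eq[of "UNIV :: 'x set" T]
    by (intro sets.finite_UN sets_block_eq meas) auto
  finally show ?thesis .
qed

lemma measure_Int_block_eq_sum:
  fixes X :: "nat \<Rightarrow> 'a \<Rightarrow> 'x::finite"
  assumes "prob_space M" and meas: "\<And>k. k \<ge> 1 \<Longrightarrow> X k \<in> measurable M (count_space UNIV)"
    and S: "S \<in> sets M" and B: "B \<subseteq> {xs. length xs = T}"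
  shows "measure M (S \<inter> {w\<in>space M. block X s T w \<in> B})
      = (\<Sum>x\<in>B. measure M (S \<inter> {w\<in>space M. block X s T w = x}))"
proof -
  interpret prob_space M by fact
  have "finite B"
    using B finite_subset finite_lists_length_eq[of "UNIV :: 'x set" T] by auto
  moreover have "S \<inter> {w\<in>space M. block X s T w \<in> B} = (\<Union>x\<in>B. S \<inter> {w\<in>space M. block X s T w = x})"
    by auto
  ultimately show ?thesis
    by (simp only:, intro finite_measure_finite_Union)
       (auto simp: disjoint_family_on_def intro!: sets.Int S sets_block_eq meas)
qed

lemma block_eq_future_event:
  assumes "length x = T"
  shows "{w\<in>space M. block X u T w = x} = future_event M X u {f. \<forall>i<T. f i = x!i}"
  using assms by (auto simp: future_event_def block_def list_eq_iff_nth_eq add_ac)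

lemma sets_cylinder:
  "{f :: nat \<Rightarrow> 'x. \<forall>i<T. f i = x!i} \<in> sets (PiM UNIV (\<lambda>_. count_space (UNIV :: 'x set)))"
proof -
  have "{f \<in> space (PiM UNIV (\<lambda>_. count_space (UNIV :: 'x set))). \<forall>i\<in>{..<T}. f i = x!i}
      \<in> sets (PiM UNIV (\<lambda>_. count_space (UNIV :: 'x set)))"
    by measurable
  then show ?thesis by (simp add: space_PiM Ball_def)
qed

lemma one_minus_truncated_le:
  fixes e :: ereal
  assumes "ereal \<bar>r - 1\<bar> \<le> e" and "0 \<le> r"
  shows "1 - real_of_ereal (max 0 (min 1 e)) \<le> r"
  using assms by (cases e) (auto simp: min_def max_def split: if_splits)

lemma conditional_block_prob_lower_bound:
  fixes X :: "nat \<Rightarrow> 'a \<Rightarrow> 'x::finite"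
  assumes stat: "stationary_proc M X"
    and t: "t \<ge> 1" and A: "A \<subseteq> {xs. length xs = t}"
    and A_pos: "measure M (past_event M X t A) > 0"
    and x: "length x = T"
  shows "(1 - real_of_ereal (max 0 (min 1 (psi_coeff M X \<tau>)))) * PT M X T {x}
      \<le> measure M (past_event M X t A \<inter> {w\<in>space M. block X (t + \<tau>) T w = x})
         / measure M (past_event M X t A)"
    (is "(1 - _) * ?p \<le> ?q")
proof (cases "?p = 0")
  case False
  define C where "C = {f :: nat \<Rightarrow> 'x. \<forall>i<T. f i = x!i}"
  define F where "F = future_event M X (t + \<tau>) C"
  have F_eq: "F = {w\<in>space M. block X (t + \<tau>) T w = x}"
    using block_eq_future_event[OF x, of M X "t + \<tau>"] by (simp add: F_def C_def)
  have "measure M {w\<in>space M. block X (t + \<tau>) T w \<in> {x}} = ?p"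
    using stat unfolding stationary_proc_def PT_def by blast
  then have F_prob: "measure M F = ?p" by (simp add: F_eq)
  with False have p_pos: "?p > 0" by (metis measure_nonneg order_less_le)
  define r where "r = measure M (past_event M X t A \<inter> F) / (measure M (past_event M X t A) * ?p)"
  have "(t, A, C) \<in> {(t, A, B). t \<ge> 1 \<and> A \<subseteq> {xs. length xs = t}
          \<and> B \<in> sets (PiM UNIV (\<lambda>_. count_space (UNIV :: 'x set)))
          \<and> measure M (past_event M X t A) > 0
          \<and> measure M (future_event M X (t + \<tau>) B) > 0}"
    using t A A_pos p_pos sets_cylinder[of T x] F_prob by (simp add: C_def F_def)
  then have "ereal \<bar>r - 1\<bar> \<le> psi_coeff M X \<tau>"
    unfolding psi_coeff_def by (rule SUP_upper2) (simp add: r_def F_def F_prob[unfolded F_def])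
  moreover have "0 \<le> r" using p_pos by (simp add: r_def)
  ultimately have "1 - real_of_ereal (max 0 (min 1 (psi_coeff M X \<tau>))) \<le> r"
    by (rule one_minus_truncated_le)
  moreover have "?q = r * ?p" using p_pos by (simp add: r_def F_eq)
  ultimately show ?thesis using p_pos by (simp add: mult_right_mono)
qed simp

lemma conditional_block_law_mixture:
  fixes X :: "nat \<Rightarrow> 'a \<Rightarrow> 'x::finite"
  assumes P: "prob_space M"
    and meas: "\<And>k. k \<ge> 1 \<Longrightarrow> X k \<in> measurable M (count_space UNIV)"
    and S: "S \<in> sets M" "measure M S > 0"
    and lam: "0 \<le> lam" "lam \<le> 1"
    and dominates: "\<And>x. length x = T \<Longrightarrow>
      (1 - lam) * PT M X T {x} \<le> measure M (S \<inter> {w\<in>space M. block X s T w = x}) / measure M S"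
  shows "\<exists>P' :: 'x list pmf. set_pmf P' \<subseteq> {xs. length xs = T} \<and>
    (\<forall>B \<subseteq> {xs. length xs = T}.
       measure M (S \<inter> {w \<in> space M. block X s T w \<in> B}) / measure M S
       = (1 - lam) * PT M X T B + lam * measure_pmf.prob P' B)"
proof -
  interpret prob_space M by fact
  define L where "L = {xs :: 'x list. length xs = T}"
  define q where "q x = measure M (S \<inter> {w\<in>space M. block X s T w = x}) / measure M S" for x
  have q_sum: "measure M (S \<inter> {w \<in> space M. block X s T w \<in> B}) / measure M S = sum q B"
    if "B \<subseteq> L" for B
    using measure_Int_block_eq_sum[OF P meas S(1), where B=B and T=T and s=s] that
    by (simp add: L_def q_def sum_divide_distrib)
  have PT_sum: "PT M X T B = (\<Sum>x\<in>B. PT M X T {x})" if "B \<subseteq> L" for B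
    using measure_Int_block_eq_sum[OF P meas sets.top, where B=B and T=T and s=0] that
    by (simp add: L_def PT_def Int_absorb1)
  have block_in_L: "{w \<in> space M. block X u T w \<in> L} = space M" for u
    by (auto simp: L_def block_def)
  have "sum q L = 1"
    using q_sum[of L] S sets.sets_into_space[OF S(1)] by (simp add: block_in_L Int_absorb2)
  moreover have "(\<Sum>x\<in>L. PT M X T {x}) = 1"
    using PT_sum[of L] by (simp add: PT_def block_in_L prob_space)
  moreover have "finite L" using finite_lists_length_eq[of "UNIV :: 'x set" T] by (simp add: L_def)
  ultimately obtain P' :: "'x list pmf" where "set_pmf P' \<subseteq> L"
    and "\<forall>B\<subseteq>L. sum q B = (1 - lam) * (\<Sum>x\<in>B. PT M X T {x}) + lam * measure_pmf.prob P' B"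
    using finite_mixture_decomposition[of L q "\<lambda>x. PT M X T {x}" lam] lam dominates S(2)
    by (auto simp: q_def L_def)
  then show ?thesis by (intro exI[of _ P']) (auto simp: q_sum PT_sum L_def)
qed

theorem lemma1:
  fixes M :: "'a measure" and X :: "nat \<Rightarrow> 'a \<Rightarrow> 'x::finite"
  assumes "prob_space M"
    and "\<And>k. k \<ge> 1 \<Longrightarrow> X k \<in> measurable M (count_space UNIV)"
    and "stationary_proc M X"
    and "psi_mixing M X"
  shows "\<exists>lam :: nat \<Rightarrow> real. lam \<longlonglongrightarrow> 0 \<and>
    (\<forall>t \<tau> T (A :: 'x list set). t \<ge> 1 \<and> A \<subseteq> {xs. length xs = t}
        \<and> measure M (past_event M X t A) > 0 \<longrightarrow>
      (\<exists>P' :: 'x list pmf. set_pmf P' \<subseteq> {xs. length xs = T} \<and>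
        (\<forall>B \<subseteq> {xs. length xs = T}.
           measure M (past_event M X t A \<inter> {w \<in> space M. block X (t + \<tau>) T w \<in> B})
             / measure M (past_event M X t A)
           = (1 - lam \<tau>) * PT M X T B + lam \<tau> * measure_pmf.prob P' B)))"
proof -
  \<comment> \<open>\<open>real_of_ereal\<close> maps \<open>\<plusminus>\<infinity>\<close> to 0, so \<open>\<psi>\<close> is truncated before the conversion.\<close>
  define lam where "lam \<tau> = real_of_ereal (max 0 (min 1 (psi_coeff M X \<tau>)))" for \<tau>
  have "(\<lambda>\<tau>. max 0 (min 1 (psi_coeff M X \<tau>))) \<longlonglongrightarrow> max 0 (min 1 0)"
    using assms(4) unfolding psi_mixing_def by (intro tendsto_intros)
  then have lam_lim: "lam \<longlonglongrightarrow> 0" unfolding lam_def by (intro lim_real_of_ereal) (simp add: zero_ereal_def)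
  have lam_bounds: "0 \<le> lam \<tau>" "lam \<tau> \<le> 1" for \<tau>
    by (cases "psi_coeff M X \<tau>"; simp add: lam_def min_def max_def)+
  have past_sets: "past_event M X t A \<in> sets M" for t A
    unfolding past_event_def using assms(2) by (rule sets_block)
  show ?thesis
  proof (intro exI[of _ lam] conjI allI impI lam_lim, elim conjE)
    fix t \<tau> T and A :: "'x list set"
    assume "t \<ge> 1" "A \<subseteq> {xs. length xs = t}" "measure M (past_event M X t A) > 0"
    then show "\<exists>P' :: 'x list pmf. set_pmf P' \<subseteq> {xs. length xs = T} \<and>
        (\<forall>B \<subseteq> {xs. length xs = T}.
           measure M (past_event M X t A \<inter> {w \<in> space M. block X (t + \<tau>) T w \<in> B})
             / measure M (past_event M X t A)
           = (1 - lam \<tau>) * PT M X T B + lam \<tau> * measure_pmf.prob P' B)"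
      using conditional_block_prob_lower_bound[OF assms(3)]
      by (intro conditional_block_law_mixture[OF assms(1,2) past_sets] lam_bounds)
         (simp_all add: lam_def)
  qed
qed

end
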